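(* Let $d\ge2$, $\alpha\in(1,2)$, and let $\mu$ be a nondegenerate $\alpha$-stable distribution on $\mathbb{R}^d$ with no shift, spectral spherical measure $\lambda$, and characteristic exponent $|z|^\alpha V(u_z)$. For $z\in\mathbb{C}$ with $\Re z>0$ let $\varrho(z)=|z|^2/(2\Re z)$. Then $$0<\varrho_0:=\sup_{u\in\mathbb{S}^{d-1}}\varrho(V(u))<\frac{\lambda(\mathbb{S}^{d-1})}{1+\cos(\pi\alpha)}<\infty.$$ Moreover, for any $R>\varrho_0$, letting $V_*=R-V$, one has $\sup_{\mathbb{S}^{d-1}}|V_*|<R$.
   Context: Let $d\ge 2$, $\mathbb{S}^{d-1}$ the unit sphere, $u_z=z/|z|$. An $\alpha$-stable distribution ($\alpha\ne1$) with no shift has $\hat\mu(z)=\exp\{-|z|^\alpha V(u_z)\}$, $V(u)=\int_{\mathbb{S}^{d-1}}|\langle u,v\rangle|^\alpha[1-i\tan(\pi\alpha/2)\mathrm{sgn}\langle u,v\rangle]\lambda(dv)$, where $\lambda$ is a finite nonzero Borel measure on the sphere (the spectral spherical measure). Nondegenerate: the support of $\mu$ is not contained in a proper affine subspace (equivalently $\inf\Re V>0$). *)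

theory Defs
  imports "HOL-Probability.Probability"
begin

definition stabV :: "real \<Rightarrow> 'a::euclidean_space measure \<Rightarrow> 'a \<Rightarrow> complex" where
  "stabV \<alpha> lam u =
     (CLINT v|lam. complex_of_real (\<bar>u \<bullet> v\<bar> powr \<alpha>) *
        (1 - \<i> * complex_of_real (tan (pi * \<alpha> / 2) * sgn (u \<bullet> v))))"

definition rho :: "complex \<Rightarrow> real" where
  "rho z = (cmod z)\<^sup>2 / (2 * Re z)"

text \<open>Nondegeneracy: the support of mu is not contained in a proper affine subspace.
  Since affine subspaces of a finite-dimensional space are closed, this says that every
  proper affine subspace has mu-measure < 1.\<close>
definition nondegenerate :: "'a::euclidean_space measure \<Rightarrow> bool" where
  "nondegenerate \<mu> \<longleftrightarrow> (\<forall>A. affine A \<and> A \<noteq> UNIV \<longrightarrow> measure \<mu> A < 1)"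

end

theory Submission
  imports Defs
begin

text \<open>Split \<open>V = A - i tan(\<pi>\<alpha>/2) B\<close> with \<open>A(u) = \<integral> |\<langle>u,v\<rangle>|\<^sup>\<alpha> d\<lambda>\<close> and B its signed
  analogue. Then \<open>|B| \<le> A\<close>, so \<open>\<rho>(V) \<le> A (1 + tan\<^sup>2(\<pi>\<alpha>/2)) / 2 = A / (1 + cos \<pi>\<alpha>)\<close>.
  Nondegeneracy forbids V to vanish (otherwise \<mu> would live on a hyperplane), whence \<open>A > 0\<close>;
  and \<open>A(u) < \<lambda>(S)\<close>, since equality would put \<lambda> on \<open>{u, -u}\<close> and make A vanish in a
  direction orthogonal to u. A and B are continuous on the compact sphere, so all suprema are
  attained and the strict bounds survive. Finally, for \<open>Re z > 0\<close>, \<open>|R - z| < R\<close> is the same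
  as \<open>\<rho>(z) < R\<close>.\<close>

lemma continuous_on_integral_dominated:
  fixes f :: "'a::metric_space \<Rightarrow> 'b \<Rightarrow> 'c::{banach,second_countable_topology}"
  assumes "finite_measure M"
    and cont: "\<And>v. v \<in> space M \<Longrightarrow> continuous_on K (\<lambda>u. f u v)"
    and meas: "\<And>u. u \<in> K \<Longrightarrow> f u \<in> borel_measurable M"
    and bound: "\<And>u v. u \<in> K \<Longrightarrow> v \<in> space M \<Longrightarrow> norm (f u v) \<le> C"
  shows "continuous_on K (\<lambda>u. integral\<^sup>L M (f u))"
proof (rule continuous_on_sequentiallyI)
  fix x a assume x: "\<forall>n. x n \<in> K" and a: "a \<in> K" and lim: "x \<longlonglongrightarrow> a"
  show "(\<lambda>n. integral\<^sup>L M (f (x n))) \<longlonglongrightarrow> integral\<^sup>L M (f a)"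
  proof (rule integral_dominated_convergence[where w="\<lambda>_. C"])
    show "integrable M (\<lambda>_. C)"
      using \<open>finite_measure M\<close> by (rule finite_measure.integrable_const)
    show "AE v in M. (\<lambda>n. f (x n) v) \<longlonglongrightarrow> f a v"
      using continuous_on_tendsto_compose[OF cont lim a] x by (intro AE_I2) (simp add: o_def)
  qed (use meas bound x a in auto)
qed

lemma compact_continuous_attains_SUP:
  fixes f :: "'a::metric_space \<Rightarrow> real"
  assumes "compact S" "S \<noteq> {}" "continuous_on S f"
  obtains x where "x \<in> S" "bdd_above (f ` S)" "(SUP y\<in>S. f y) = f x"
proof -
  obtain x where x: "x \<in> S" "\<And>y. y \<in> S \<Longrightarrow> f y \<le> f x"
    using continuous_attains_sup[OF assms] by blast
  then have "bdd_above (f ` S)" by (auto simp: bdd_above_def)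
  moreover have "(SUP y\<in>S. f y) = f x" using x by (intro cSup_eq_maximum) auto
  ultimately show ?thesis using that x(1) by blast
qed

lemma cos_divide_Suc_eq_1_imp_zero:
  fixes a :: real
  assumes "\<And>n::nat. cos (a / real (Suc n)) = 1"
  shows "a = 0"
proof (rule ccontr)
  assume "a \<noteq> 0"
  obtain n :: nat where "\<bar>a\<bar> / (2 * pi) < real n" using reals_Archimedean2 by blast
  then have small: "\<bar>a / real (Suc n)\<bar> < 2 * pi"
    by (simp add: field_simps) (smt (verit) pi_gt_zero)
  obtain k :: int where k: "a / real (Suc n) = real_of_int k * 2 * pi"
    using assms[of n] cos_one_2pi_int by blast
  then have "\<bar>real_of_int k\<bar> * (2 * pi) < 2 * pi"
    using small by (simp add: abs_mult)
  then have "k = 0" by simp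
  then show False using k \<open>a \<noteq> 0\<close> by simp
qed

lemma continuous_on_sgn_mult_abs_powr:
  fixes a :: real
  assumes "0 < a"
  shows "continuous_on UNIV (\<lambda>x::real. sgn x * \<bar>x\<bar> powr a)"
proof -
  have eq: "sgn x * \<bar>x\<bar> powr a = x * \<bar>x\<bar> powr (a - 1)" for x :: real
  proof (cases "x = 0")
    case False
    then have "\<bar>x\<bar> powr a = \<bar>x\<bar> * \<bar>x\<bar> powr (a - 1)"
      using powr_mult_base[of "\<bar>x\<bar>" "a - 1"] by simp
    then show ?thesis by (metis mult.assoc sgn_mult_abs)
  qed simp
  have "isCont (\<lambda>x::real. sgn x * \<bar>x\<bar> powr a) x" for x
  proof (cases "x = 0")
    case True
    have "continuous_on UNIV (\<lambda>x::real. \<bar>x\<bar> powr a)"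
      using assms by (intro continuous_on_powr' continuous_intros) auto
    then have "((\<lambda>x::real. \<bar>x\<bar> powr a) \<longlongrightarrow> \<bar>0\<bar> powr a) (at 0)"
      by (metis continuous_on_eq_continuous_at isCont_def open_UNIV UNIV_I)
    then have "((\<lambda>x::real. \<bar>x\<bar> powr a) \<longlongrightarrow> 0) (at 0)"
      by simp
    moreover have "(\<lambda>x::real. norm (sgn x * \<bar>x\<bar> powr a)) = (\<lambda>x. \<bar>x\<bar> powr a)"
      by (auto simp: abs_mult sgn_if)
    ultimately have "((\<lambda>x::real. sgn x * \<bar>x\<bar> powr a) \<longlongrightarrow> 0) (at 0)"
      by (metis tendsto_norm_zero_cancel)
    then show ?thesis using True by (simp add: isCont_def)
  next
    case False
    then show ?thesis unfolding eq by (intro continuous_intros) auto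
  qed
  then show ?thesis by (intro continuous_at_imp_continuous_on) auto
qed

locale sphere_measure = finite_measure lam for lam :: "'a::euclidean_space measure" +
  assumes sets_lam: "sets lam = sets (restrict_space borel (sphere 0 1))"
begin

lemma space_lam: "space lam = sphere 0 1"
  using sets_eq_imp_space_eq[OF sets_lam] by simp

lemma borel_measurable_lam:
  fixes f :: "'a \<Rightarrow> 'b::topological_space"
  shows "f \<in> borel_measurable borel \<Longrightarrow> f \<in> borel_measurable lam"
  using measurable_cong_sets[OF sets_lam refl] measurable_restrict_space1 by blast

lemma abs_inner_le_norm: "v \<in> space lam \<Longrightarrow> \<bar>u \<bullet> v\<bar> \<le> norm u"
  using Cauchy_Schwarz_ineq2[of u v] by (simp add: space_lam)

lemma integrable_inner_comp:
  fixes f :: "real \<Rightarrow> real"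
  assumes f: "f \<in> borel_measurable borel" and "0 \<le> \<alpha>"
    and f_le: "\<And>t. \<bar>f t\<bar> \<le> \<bar>t\<bar> powr \<alpha>"
  shows "integrable lam (\<lambda>v. f (u \<bullet> v))"
proof (rule integrable_const_bound[where B = "norm u powr \<alpha>"])
  show "(\<lambda>v. f (u \<bullet> v)) \<in> borel_measurable lam"
    by (intro borel_measurable_lam measurable_compose[OF _ f] borel_measurable_continuous_onI
        continuous_intros)
  show "AE v in lam. norm (f (u \<bullet> v)) \<le> norm u powr \<alpha>"
  proof (rule AE_I2)
    fix v assume "v \<in> space lam"
    then have "\<bar>u \<bullet> v\<bar> powr \<alpha> \<le> norm u powr \<alpha>"
      using abs_inner_le_norm \<open>0 \<le> \<alpha>\<close> by (intro powr_mono2) auto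
    then show "norm (f (u \<bullet> v)) \<le> norm u powr \<alpha>"
      using f_le[of "u \<bullet> v"] by simp
  qed
qed

lemma continuous_on_inner_integral:
  fixes f :: "real \<Rightarrow> real"
  assumes f: "continuous_on UNIV f"
  shows "continuous_on (cball 0 r) (\<lambda>u. LINT v|lam. f (u \<bullet> v))"
proof -
  have "bounded (f ` {-r..r})"
    using f by (intro compact_imp_bounded compact_continuous_image compact_Icc)
      (auto intro: continuous_on_subset)
  then obtain C where C: "\<forall>t\<in>{-r..r}. \<bar>f t\<bar> \<le> C"
    by (auto simp: bounded_iff)
  show ?thesis
  proof (rule continuous_on_integral_dominated[where C = C])
    show "finite_measure lam" by unfold_locales
    show "continuous_on (cball 0 r) (\<lambda>u. f (u \<bullet> v))" for v :: 'a
      by (intro continuous_on_compose2[OF f] continuous_intros) auto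
    show "(\<lambda>v. f (u \<bullet> v)) \<in> borel_measurable lam" for u
      by (intro borel_measurable_lam borel_measurable_continuous_onI
          continuous_on_compose2[OF f] continuous_intros) auto
    show "norm (f (u \<bullet> v)) \<le> C" if "u \<in> cball 0 r" "v \<in> space lam" for u v
      using C abs_inner_le_norm[of v u] that by (auto simp: abs_le_iff)
  qed
qed

definition abs_moment :: "real \<Rightarrow> 'a \<Rightarrow> real" where
  "abs_moment \<alpha> u = (LINT v|lam. \<bar>u \<bullet> v\<bar> powr \<alpha>)"

definition sgn_moment :: "real \<Rightarrow> 'a \<Rightarrow> real" where
  "sgn_moment \<alpha> u = (LINT v|lam. sgn (u \<bullet> v) * \<bar>u \<bullet> v\<bar> powr \<alpha>)"

lemma abs_sgn_mult_abs_powr: "\<bar>sgn t * \<bar>t\<bar> powr \<alpha>\<bar> = \<bar>t\<bar> powr \<alpha>" for t :: real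
  by (cases "t = 0") (simp_all add: abs_mult)

lemma integrable_abs_powr: "0 \<le> \<alpha> \<Longrightarrow> integrable lam (\<lambda>v. \<bar>u \<bullet> v\<bar> powr \<alpha>)"
  by (rule integrable_inner_comp) auto

lemma integrable_sgn_mult_abs_powr:
  "0 \<le> \<alpha> \<Longrightarrow> integrable lam (\<lambda>v. sgn (u \<bullet> v) * \<bar>u \<bullet> v\<bar> powr \<alpha>)"
  by (rule integrable_inner_comp) (auto simp: abs_sgn_mult_abs_powr)

lemma stabV_eq_moments:
  assumes "0 \<le> \<alpha>"
  shows "stabV \<alpha> lam u = abs_moment \<alpha> u - \<i> * tan (pi * \<alpha> / 2) * sgn_moment \<alpha> u"
proof -
  let ?t = "tan (pi * \<alpha> / 2)"
  have "stabV \<alpha> lam u = (CLINT v|lam. complex_of_real (\<bar>u \<bullet> v\<bar> powr \<alpha>)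
      - \<i> * ?t * complex_of_real (sgn (u \<bullet> v) * \<bar>u \<bullet> v\<bar> powr \<alpha>))"
    unfolding stabV_def by (intro Bochner_Integration.integral_cong) (simp_all add: algebra_simps)
  also have "\<dots> = abs_moment \<alpha> u - \<i> * ?t * sgn_moment \<alpha> u"
  proof -
    have "complex_integrable lam (\<lambda>v. complex_of_real (\<bar>u \<bullet> v\<bar> powr \<alpha>))"
      using integrable_abs_powr[OF assms] by (rule integrable_of_real)
    moreover have "complex_integrable lam
        (\<lambda>v. \<i> * ?t * complex_of_real (sgn (u \<bullet> v) * \<bar>u \<bullet> v\<bar> powr \<alpha>))"
      using integrable_sgn_mult_abs_powr[OF assms] by (intro integrable_mult_right integrable_of_real)
    ultimately show ?thesis
      by (simp only: Bochner_Integration.integral_diff integral_mult_right_zero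
          integral_complex_of_real abs_moment_def sgn_moment_def)
  qed
  finally show ?thesis .
qed

lemma abs_sgn_moment_le: "\<bar>sgn_moment \<alpha> u\<bar> \<le> abs_moment \<alpha> u"
proof -
  have "\<bar>sgn_moment \<alpha> u\<bar> \<le> (LINT v|lam. \<bar>sgn (u \<bullet> v) * \<bar>u \<bullet> v\<bar> powr \<alpha>\<bar>)"
    unfolding sgn_moment_def by (rule integral_abs_bound)
  then show ?thesis by (simp only: abs_sgn_mult_abs_powr abs_moment_def)
qed

lemma abs_moment_le_measure:
  assumes "0 \<le> \<alpha>" "norm u = 1"
  shows "abs_moment \<alpha> u \<le> measure lam (space lam)"
proof -
  have "abs_moment \<alpha> u \<le> (LINT v|lam. 1)"
    unfolding abs_moment_def using integrable_abs_powr[OF assms(1)] abs_inner_le_norm[of _ u] assms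
    by (intro integral_mono) (auto intro!: powr_le1)
  then show ?thesis by simp
qed

lemma continuous_on_abs_moment: "0 < \<alpha> \<Longrightarrow> continuous_on (cball 0 r) (abs_moment \<alpha>)"
  unfolding abs_moment_def
  by (intro continuous_on_inner_integral continuous_on_powr' continuous_intros) auto

lemma continuous_on_sgn_moment: "0 < \<alpha> \<Longrightarrow> continuous_on (cball 0 r) (sgn_moment \<alpha>)"
  unfolding sgn_moment_def
  by (intro continuous_on_inner_integral continuous_on_sgn_mult_abs_powr)

lemma abs_moment_eq_measure_imp_AE_antipodal:
  assumes "0 < \<alpha>" "norm u = 1"
    and max: "abs_moment \<alpha> u = measure lam (space lam)"
  shows "AE v in lam. v = u \<or> v = - u"
proof -
  have "(LINT v|lam. 1 - \<bar>u \<bullet> v\<bar> powr \<alpha>) = 0"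
    using max integrable_abs_powr[of \<alpha> u] \<open>0 < \<alpha>\<close> by (simp add: abs_moment_def)
  moreover have "integrable lam (\<lambda>v. 1 - \<bar>u \<bullet> v\<bar> powr \<alpha>)"
    using integrable_abs_powr[of \<alpha> u] \<open>0 < \<alpha>\<close> by simp
  moreover have le1: "\<bar>u \<bullet> v\<bar> \<le> 1" if "v \<in> space lam" for v
    using abs_inner_le_norm[OF that, of u] \<open>norm u = 1\<close> by simp
  ultimately have "AE v in lam. 1 - \<bar>u \<bullet> v\<bar> powr \<alpha> = 0"
    using \<open>0 < \<alpha>\<close> by (subst (asm) integral_nonneg_eq_0_iff_AE) (auto intro!: powr_le1)
  then show ?thesis
  proof (rule AE_mp, intro AE_I2 impI)
    fix v assume v: "v \<in> space lam" and "1 - \<bar>u \<bullet> v\<bar> powr \<alpha> = 0"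
    then have "\<not> \<bar>u \<bullet> v\<bar> < 1"
      using powr_less_mono2[OF \<open>0 < \<alpha>\<close>, of "\<bar>u \<bullet> v\<bar>" 1] by auto
    then have "\<bar>u \<bullet> v\<bar> = norm u * norm v"
      using le1[OF v] v \<open>norm u = 1\<close> by (simp add: space_lam)
    then show "v = u \<or> v = - u"
      using norm_cauchy_schwarz_abs_eq[of u v] v \<open>norm u = 1\<close> by (simp add: space_lam)
  qed
qed

lemma abs_moment_less_measure:
  assumes "0 < \<alpha>" "DIM('a) \<ge> 2" "norm u = 1"
    and pos: "\<And>w. norm w = 1 \<Longrightarrow> 0 < abs_moment \<alpha> w"
  shows "abs_moment \<alpha> u < measure lam (space lam)"
proof (rule ccontr)
  assume "\<not> abs_moment \<alpha> u < measure lam (space lam)"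
  then have "AE v in lam. v = u \<or> v = - u"
    using abs_moment_le_measure[of \<alpha> u] assms
    by (intro abs_moment_eq_measure_imp_AE_antipodal) auto
  obtain w0 where "w0 \<noteq> 0" "orthogonal u w0"
    using orthogonal_to_vector_exists[OF \<open>DIM('a) \<ge> 2\<close>] by blast
  define w where "w = sgn w0"
  have "norm w = 1" "u \<bullet> w = 0"
    using \<open>w0 \<noteq> 0\<close> \<open>orthogonal u w0\<close> by (simp_all add: w_def norm_sgn orthogonal_def sgn_div_norm)
  have "(\<lambda>v. \<bar>w \<bullet> v\<bar> powr \<alpha>) \<in> borel_measurable lam"
    using integrable_abs_powr[of \<alpha> w] \<open>0 < \<alpha>\<close> by auto
  then have "abs_moment \<alpha> w = (LINT v|lam. 0)"
    unfolding abs_moment_def using \<open>AE v in lam. v = u \<or> v = - u\<close>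
    by (intro integral_cong_AE) (auto simp: \<open>u \<bullet> w = 0\<close> inner_commute)
  then show False using pos[OF \<open>norm w = 1\<close>] by simp
qed

lemma abs_moment_nonneg: "0 \<le> abs_moment \<alpha> u"
  unfolding abs_moment_def by (rule Bochner_Integration.integral_nonneg) simp

lemma Re_stabV: "0 \<le> \<alpha> \<Longrightarrow> Re (stabV \<alpha> lam u) = abs_moment \<alpha> u"
  by (simp add: stabV_eq_moments)

lemma abs_Im_stabV_le:
  assumes "0 \<le> \<alpha>"
  shows "\<bar>Im (stabV \<alpha> lam u)\<bar> \<le> \<bar>tan (pi * \<alpha> / 2)\<bar> * Re (stabV \<alpha> lam u)"
  using abs_sgn_moment_le[of \<alpha> u] assms
  by (simp add: stabV_eq_moments abs_mult mult_left_mono)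

lemma Re_stabV_pos:
  assumes "0 \<le> \<alpha>" "stabV \<alpha> lam u \<noteq> 0"
  shows "0 < Re (stabV \<alpha> lam u)"
proof -
  have "0 \<le> Re (stabV \<alpha> lam u)"
    using abs_moment_nonneg Re_stabV assms(1) by simp
  moreover have "Re (stabV \<alpha> lam u) = 0 \<Longrightarrow> Im (stabV \<alpha> lam u) = 0"
    using abs_Im_stabV_le[OF assms(1), of u] by simp
  ultimately show ?thesis
    using assms(2) by (auto simp: complex_eq_iff)
qed

lemma continuous_on_stabV:
  assumes "0 < \<alpha>"
  shows "continuous_on (sphere 0 1) (stabV \<alpha> lam)"
proof -
  have "continuous_on (sphere 0 1) (\<lambda>u. complex_of_real (abs_moment \<alpha> u)
      - \<i> * tan (pi * \<alpha> / 2) * complex_of_real (sgn_moment \<alpha> u))"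
    using continuous_on_subset[OF continuous_on_abs_moment[OF assms] sphere_cball]
      continuous_on_subset[OF continuous_on_sgn_moment[OF assms] sphere_cball]
    by (intro continuous_intros)
  then show ?thesis
    by (rule continuous_on_eq) (use assms in \<open>simp add: stabV_eq_moments\<close>)
qed

end

lemma charfun_eq_1_imp_AE_cos:
  fixes \<mu> :: "'a::euclidean_space measure"
  assumes "prob_space \<mu>" "sets \<mu> = sets borel"
    and char: "(CLINT x|\<mu>. exp (\<i> * complex_of_real (z \<bullet> x))) = 1"
  shows "AE x in \<mu>. cos (z \<bullet> x) = 1"
proof -
  interpret prob_space \<mu> by fact
  have meas: "f \<in> borel_measurable \<mu>" if "continuous_on UNIV f" for f :: "'a \<Rightarrow> 'b::real_normed_vector"
    using measurable_cong_sets[OF \<open>sets \<mu> = sets borel\<close> refl] borel_measurable_continuous_onI[OF that]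
    by blast
  have meas_exp: "(\<lambda>x. exp (\<i> * complex_of_real (z \<bullet> x))) \<in> borel_measurable \<mu>"
    by (intro meas continuous_intros)
  have int_exp: "complex_integrable \<mu> (\<lambda>x. exp (\<i> * complex_of_real (z \<bullet> x)))"
    by (rule integrable_const_bound[where B = 1, OF _ meas_exp]) (simp add: norm_exp)
  have meas_cos: "(\<lambda>x. cos (z \<bullet> x)) \<in> borel_measurable \<mu>"
    by (intro meas continuous_intros)
  have int_cos: "integrable \<mu> (\<lambda>x. cos (z \<bullet> x))"
    by (rule integrable_const_bound[where B = 1, OF _ meas_cos]) simp
  have "(LINT x|\<mu>. cos (z \<bullet> x)) = 1"
    using integral_Re[OF int_exp] char by (simp add: Re_exp)
  then have "(LINT x|\<mu>. 1 - cos (z \<bullet> x)) = 0"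
    using int_cos by (simp add: prob_space)
  moreover have "integrable \<mu> (\<lambda>x. 1 - cos (z \<bullet> x))"
    using int_cos by simp
  ultimately have "AE x in \<mu>. 1 - cos (z \<bullet> x) = 0"
    using integral_nonneg_eq_0_iff_AE[of \<mu> "\<lambda>x. 1 - cos (z \<bullet> x)"] by simp
  then show ?thesis by simp
qed

lemma charfun_eq_1_on_ray_imp_AE_hyperplane:
  fixes \<mu> :: "'a::euclidean_space measure"
  assumes "prob_space \<mu>" "sets \<mu> = sets borel"
    and "\<And>n::nat. (CLINT x|\<mu>. exp (\<i> * complex_of_real ((w /\<^sub>R real (Suc n)) \<bullet> x))) = 1"
  shows "AE x in \<mu>. w \<bullet> x = 0"
proof -
  have "AE x in \<mu>. cos ((w /\<^sub>R real (Suc n)) \<bullet> x) = 1" for n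
    using charfun_eq_1_imp_AE_cos[OF assms(1,2,3)] .
  then have "AE x in \<mu>. \<forall>n::nat. cos ((w \<bullet> x) / real (Suc n)) = 1"
    by (simp add: AE_all_countable divide_inverse_commute)
  then show ?thesis
    by (rule AE_mp) (use cos_divide_Suc_eq_1_imp_zero in auto)
qed

lemma nondegenerate_not_AE_hyperplane:
  fixes \<mu> :: "'a::euclidean_space measure"
  assumes "prob_space \<mu>" "sets \<mu> = sets borel" "nondegenerate \<mu>" "w \<noteq> 0"
  shows "\<not> (AE x in \<mu>. w \<bullet> x = 0)"
proof
  interpret prob_space \<mu> by fact
  assume "AE x in \<mu>. w \<bullet> x = 0"
  moreover have "{x. w \<bullet> x = 0} \<in> sets \<mu>"
    unfolding \<open>sets \<mu> = sets borel\<close> by (intro borel_closed closed_hyperplane)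
  ultimately have "prob {x. w \<bullet> x = 0} = 1"
    using prob_Collect_eq_1[of "\<lambda>x. w \<bullet> x = 0"] sets_eq_imp_space_eq[OF \<open>sets \<mu> = sets borel\<close>]
    by simp
  moreover have "affine {x. w \<bullet> x = 0}"
    by (intro subspace_imp_affine subspace_hyperplane)
  moreover have "{x. w \<bullet> x = 0} \<noteq> UNIV"
    using \<open>w \<noteq> 0\<close> by (metis (mono_tags) UNIV_I inner_eq_zero_iff mem_Collect_eq)
  ultimately show False
    using \<open>nondegenerate \<mu>\<close> unfolding nondegenerate_def by fastforce
qed

text \<open>If V vanished at u, the characteristic function would be 1 along the ray through u.\<close>
lemma stabV_neq_0_if_nondegenerate:
  fixes \<mu> lam :: "'a::euclidean_space measure"
  assumes "prob_space \<mu>" "sets \<mu> = sets borel" "nondegenerate \<mu>"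
    and char: "\<And>z::'a. (CLINT x|\<mu>. exp (\<i> * complex_of_real (z \<bullet> x)))
                  = exp (- complex_of_real (norm z powr \<alpha>) * stabV \<alpha> lam (sgn z))"
    and "norm u = 1"
  shows "stabV \<alpha> lam u \<noteq> 0"
proof
  assume "stabV \<alpha> lam u = 0"
  moreover have "sgn (u /\<^sub>R real (Suc n)) = u" for n
    using \<open>norm u = 1\<close> by (simp add: sgn_scaleR sgn_div_norm)
  ultimately have "AE x in \<mu>. u \<bullet> x = 0"
    using char by (intro charfun_eq_1_on_ray_imp_AE_hyperplane assms(1,2))
      (simp only: mult_zero_right exp_zero)
  moreover have "u \<noteq> 0" using \<open>norm u = 1\<close> by auto
  ultimately show False
    using nondegenerate_not_AE_hyperplane[OF assms(1-3)] by blast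
qed

lemma rho_pos:
  assumes "0 < Re z"
  shows "0 < rho z"
proof -
  have "z \<noteq> 0" using assms by auto
  then show ?thesis using assms by (simp add: rho_def)
qed

lemma cmod_diff_less_if_rho_less:
  assumes "0 < Re z" "rho z < R"
  shows "cmod (complex_of_real R - z) < R"
proof -
  have "(cmod z)\<^sup>2 < 2 * R * Re z"
    using assms by (simp add: rho_def divide_less_eq algebra_simps)
  then have "(cmod (complex_of_real R - z))\<^sup>2 < R\<^sup>2"
    unfolding cmod_power2 by (simp add: power2_eq_square algebra_simps)
  moreover have "0 < R" using rho_pos[OF assms(1)] assms(2) by simp
  ultimately show ?thesis
    using power2_less_imp_less by fastforce
qed

lemma rho_le_if_abs_Im_le:
  assumes "0 < Re z" "\<bar>Im z\<bar> \<le> c * Re z"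
  shows "rho z \<le> Re z * (1 + c\<^sup>2) / 2"
proof -
  have "(Im z)\<^sup>2 \<le> (c * Re z)\<^sup>2"
    using power_mono[OF assms(2) abs_ge_zero, of 2] by simp
  then show ?thesis
    using assms(1) unfolding rho_def cmod_power2 by (simp add: field_simps power2_eq_square)
qed

lemma SUP_rho_bounds:
  fixes V :: "'a::metric_space \<Rightarrow> complex"
  assumes "compact S" "S \<noteq> {}" "continuous_on S V"
    and Re_pos: "\<And>u. u \<in> S \<Longrightarrow> 0 < Re (V u)"
    and Re_less: "\<And>u. u \<in> S \<Longrightarrow> Re (V u) < L"
    and Im_le: "\<And>u. u \<in> S \<Longrightarrow> \<bar>Im (V u)\<bar> \<le> c * Re (V u)"
  shows "bdd_above ((\<lambda>u. rho (V u)) ` S)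
       \<and> 0 < (SUP u\<in>S. rho (V u))
       \<and> (SUP u\<in>S. rho (V u)) < L * (1 + c\<^sup>2) / 2
       \<and> (\<forall>R > (SUP u\<in>S. rho (V u)).
            bdd_above ((\<lambda>u. cmod (complex_of_real R - V u)) ` S)
            \<and> (SUP u\<in>S. cmod (complex_of_real R - V u)) < R)"
proof -
  have "2 * Re (V u) \<noteq> 0" if "u \<in> S" for u
    using Re_pos[OF that] by simp
  then have "continuous_on S (\<lambda>u. rho (V u))"
    unfolding rho_def by (intro continuous_intros \<open>continuous_on S V\<close>) auto
  then obtain u0 where u0: "u0 \<in> S" "bdd_above ((\<lambda>u. rho (V u)) ` S)"
      and sup_eq: "(SUP u\<in>S. rho (V u)) = rho (V u0)"
    using compact_continuous_attains_SUP assms(1,2) by metis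
  have "rho (V u0) \<le> Re (V u0) * (1 + c\<^sup>2) / 2"
    using u0 Re_pos Im_le by (intro rho_le_if_abs_Im_le) auto
  also have "\<dots> < L * (1 + c\<^sup>2) / 2"
    using u0 Re_less by (intro divide_strict_right_mono mult_strict_right_mono)
      (auto intro: add_pos_nonneg)
  finally have "rho (V u0) < L * (1 + c\<^sup>2) / 2" .
  moreover have "bdd_above ((\<lambda>u. cmod (R - V u)) ` S) \<and> (SUP u\<in>S. cmod (R - V u)) < R"
    if "rho (V u0) < R" for R :: real
  proof -
    have "continuous_on S (\<lambda>u. cmod (R - V u))"
      by (intro continuous_intros \<open>continuous_on S V\<close>)
    then obtain u1 where u1: "u1 \<in> S" "bdd_above ((\<lambda>u. cmod (R - V u)) ` S)"
        "(SUP u\<in>S. cmod (R - V u)) = cmod (R - V u1)"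
      using compact_continuous_attains_SUP assms(1,2) by metis
    have "rho (V u1) \<le> rho (V u0)"
      using cSUP_upper[OF u1(1) u0(2)] sup_eq by simp
    then have "cmod (R - V u1) < R"
      using that Re_pos[OF u1(1)] by (intro cmod_diff_less_if_rho_less) auto
    then show ?thesis using u1 by simp
  qed
  ultimately show ?thesis
    using u0 sup_eq rho_pos Re_pos by simp
qed

lemma one_plus_tan_half_squared:
  assumes "cos (x / 2) \<noteq> 0"
  shows "1 + (tan (x / 2))\<^sup>2 = 2 / (1 + cos x)"
  using tan_sec[OF assms] cos_double_cos[of "x / 2"] assms
  by (simp add: divide_simps)

theorem lemma5p3:
  fixes \<mu> lam :: "'a::euclidean_space measure" and \<alpha> :: real
  assumes dim: "DIM('a) \<ge> 2"
    and alpha: "1 < \<alpha>" "\<alpha> < 2"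
    and lam_sets: "sets lam = sets (restrict_space borel (sphere (0::'a) 1))"
    and lam_fin: "finite_measure lam"
    and lam_nz: "emeasure lam (space lam) \<noteq> 0"
    and mu_prob: "prob_space \<mu>"
    and mu_sets: "sets \<mu> = sets borel"
    and mu_char: "\<And>z::'a. (CLINT x|\<mu>. exp (\<i> * complex_of_real (z \<bullet> x)))
                      = exp (- complex_of_real (norm z powr \<alpha>) * stabV \<alpha> lam (sgn z))"
    and nondeg: "nondegenerate \<mu>"
  shows "bdd_above ((\<lambda>u. rho (stabV \<alpha> lam u)) ` sphere 0 1)
       \<and> 0 < (SUP u\<in>sphere 0 1. rho (stabV \<alpha> lam u))
       \<and> (SUP u\<in>sphere 0 1. rho (stabV \<alpha> lam u)) < measure lam (space lam) / (1 + cos (pi * \<alpha>))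
       \<and> (\<forall>R > (SUP u\<in>sphere 0 1. rho (stabV \<alpha> lam u)).
            bdd_above ((\<lambda>u. cmod (R - stabV \<alpha> lam u)) ` sphere 0 1)
            \<and> (SUP u\<in>sphere 0 1. cmod (R - stabV \<alpha> lam u)) < R)"
proof -
  interpret sphere_measure lam
    by (intro sphere_measure.intro sphere_measure_axioms.intro lam_fin lam_sets)
  let ?V = "stabV \<alpha> lam" and ?L = "measure lam (space lam)" and ?c = "\<bar>tan (pi * \<alpha> / 2)\<bar>"
  have Re_pos: "0 < Re (?V u)" if "u \<in> sphere 0 1" for u
    using stabV_neq_0_if_nondegenerate[OF mu_prob mu_sets nondeg mu_char] Re_stabV_pos that alpha
    by simp
  have Re_less: "Re (?V u) < ?L" if "u \<in> sphere 0 1" for u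
    using abs_moment_less_measure[of \<alpha> u] Re_pos Re_stabV that alpha dim by simp
  have Im_le: "\<bar>Im (?V u)\<bar> \<le> ?c * Re (?V u)" for u
    using abs_Im_stabV_le alpha by simp
  have cont: "continuous_on (sphere 0 1) ?V"
    using alpha by (intro continuous_on_stabV) simp
  have "cos (pi * \<alpha> / 2) < 0"
    using alpha by (intro cos_lt_zero_pi) auto
  then have bound_eq: "?L * (1 + ?c\<^sup>2) / 2 = ?L / (1 + cos (pi * \<alpha>))"
    using one_plus_tan_half_squared[of "pi * \<alpha>"] by (simp, simp add: field_split_simps)
  show ?thesis
    using SUP_rho_bounds[OF compact_sphere _ cont Re_pos Re_less Im_le]
    unfolding bound_eq by simp
qed

end
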